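(* For every fixed $m\ge 2$, \[s\text{-}sat(Q_n,Q_m)\ge\Big(\frac{m+1}{2}-o(1)\Big)2^n\quad\text{as } n\to\infty.\]
   Context: $Q_n$ is the hypercube on $\{0,1\}^n$ with edges between vertices differing in exactly one coordinate. A copy of $F$ is a subgraph isomorphic to $F$. A graph $G$ is $(Q_n,F)$-semi-saturated if $G\subseteq Q_n$ and adding any edge of $E(Q_n)\setminus E(G)$ increases the number of copies of $F$. $s\text{-}sat(Q_n,F)$ is the minimum number of edges of a $(Q_n,F)$-semi-saturated graph. *)

theory Defs
  imports Complex_Main
begin

text \<open>Vertices of the hypercube Q_n: subsets of {0..<n} (i.e. 0/1 vectors of length n).
  Edges: unordered pairs of vertices whose symmetric difference has exactly one element.\<close>

definition QV :: "nat \<Rightarrow> nat set set" where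
  "QV n = {x. x \<subseteq> {..<n}}"

definition QE :: "nat \<Rightarrow> nat set set set" where
  "QE n = {{x, y} | x y. x \<in> QV n \<and> y \<in> QV n \<and> card ((x - y) \<union> (y - x)) = 1}"

text \<open>Since Q_m (m \<ge> 1) has no isolated
  vertices, a copy is determined by its edge set.\<close>

definition is_copy :: "nat \<Rightarrow> nat \<Rightarrow> nat set set set \<Rightarrow> bool" where
  "is_copy n m H \<longleftrightarrow> (\<exists>f. f ` QV m \<subseteq> QV n \<and> inj_on f (QV m) \<and>
       H = (\<lambda>e. f ` e) ` QE m)"

definition num_copies :: "nat \<Rightarrow> nat \<Rightarrow> nat set set set \<Rightarrow> nat" where
  "num_copies n m E = card {H. H \<subseteq> E \<and> is_copy n m H}"

definition semi_saturated :: "nat \<Rightarrow> nat \<Rightarrow> nat set set set \<Rightarrow> bool" where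
  "semi_saturated n m E \<longleftrightarrow> E \<subseteq> QE n \<and>
     (\<forall>e \<in> QE n - E. num_copies n m (insert e E) > num_copies n m E)"

definition s_sat :: "nat \<Rightarrow> nat \<Rightarrow> nat" where
  "s_sat n m = (LEAST k. \<exists>E. semi_saturated n m E \<and> card E = k)"

end

theory Submission imports Defs begin

(* Let E be (Q_n,Q_m)-semi-saturated and v a vertex missing the edge in direction b.
   Adding {v, v+b} creates a copy of Q_m through it; near v this copy is a coordinate
   subcube, so v has m-1 directions a in E such that the square v, v+a, v+a+b, v+b
   has its other three edges in E (missing_edge_squares).  Consequently every vertex
   of non-full degree has degree >= m-1, the neighbours of a vertex of degree m-1 have
   degree about n, and a vertex of degree m has a neighbour of degree about n/2.
   Calling a vertex high when its degree is at least T = (n-m) div 2, each low vertex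
   collects m+1 "charge" from its own degree and its high neighbours (plus, for m = 2,
   an injective partner among the high vertices for each vertex of degree 1).  Double
   counting (double_count) gives (m+1) 2^n T <= 2|E| (T+m+2), and letting n grow gives
   the theorem. *)

definition flip :: "nat set \<Rightarrow> nat \<Rightarrow> nat set" where
  "flip x i = (if i \<in> x then x - {i} else insert i x)"

lemma mem_flip: "z \<in> flip x i \<longleftrightarrow> (z \<in> x) \<noteq> (z = i)"
  by (auto simp: flip_def)

lemma flip_flip [simp]: "flip (flip x i) i = x"
  by (auto simp: set_eq_iff mem_flip)

lemma flip_comm: "flip (flip x i) j = flip (flip x j) i"
  by (auto simp: set_eq_iff mem_flip)

lemma flip_neq [simp]: "flip x i \<noteq> x" "x \<noteq> flip x i"
  by (auto simp: set_eq_iff mem_flip)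

lemma flip_inj [simp]: "flip x i = flip x j \<longleftrightarrow> i = j"
  by (auto simp: set_eq_iff mem_flip)

lemma flip_inj2 [simp]: "flip x i = flip y i \<longleftrightarrow> x = y"
  by (metis flip_flip)

lemma flip_QV: "x \<in> QV n \<Longrightarrow> i < n \<Longrightarrow> flip x i \<in> QV n"
  by (auto simp: QV_def flip_def)

lemma finite_QV [simp]: "finite (QV n)"
  by (simp add: QV_def)

lemma card_QV: "card (QV n) = 2 ^ n"
proof -
  have "QV n = Pow {..<n}" by (auto simp: QV_def)
  thus ?thesis by (simp add: card_Pow)
qed

lemma adj_iff_flip: "card (sym_diff x y) = 1 \<longleftrightarrow> (\<exists>i. y = flip x i)"
proof -
  have "sym_diff x y = {i} \<longleftrightarrow> y = flip x i" for i
    by (auto simp: set_eq_iff mem_flip)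
  thus ?thesis by (simp add: card_1_singleton_iff)
qed

lemma QE_iff: "e \<in> QE n \<longleftrightarrow> (\<exists>x i. x \<in> QV n \<and> i < n \<and> e = {x, flip x i})"
proof
  assume "e \<in> QE n"
  then obtain x y where "x \<in> QV n" "y \<in> QV n" "card (sym_diff x y) = 1" "e = {x, y}"
    unfolding QE_def by blast
  then obtain i where x: "x \<in> QV n" "flip x i \<in> QV n" and e: "e = {x, flip x i}"
    unfolding adj_iff_flip by blast
  have "i \<in> x \<or> i \<in> flip x i" by (simp add: mem_flip)
  then have "i < n" using x by (auto simp: QV_def)
  thus "\<exists>x i. x \<in> QV n \<and> i < n \<and> e = {x, flip x i}" using x e by blast
next
  assume "\<exists>x i. x \<in> QV n \<and> i < n \<and> e = {x, flip x i}"
  thus "e \<in> QE n" unfolding QE_def adj_iff_flip using flip_QV by blast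
qed

lemma QE_memI: "x \<in> QV n \<Longrightarrow> i < n \<Longrightarrow> {x, flip x i} \<in> QE n"
  using QE_iff by blast

lemma QE_pair: "{x, y} \<in> QE n \<Longrightarrow> x \<in> QV n \<and> (\<exists>i<n. y = flip x i)"
  unfolding QE_iff doubleton_eq_iff by (metis flip_QV flip_flip)

lemma finite_QE: "finite (QE n)"
proof -
  have "QE n \<subseteq> Pow (QV n)" using flip_QV by (auto simp: QE_iff)
  thus ?thesis by (rule finite_subset) simp
qed

lemma card_QE_edge: "e \<in> QE n \<Longrightarrow> finite e \<and> card e \<le> 2"
  by (auto simp: QE_iff card_insert_le_m1)

(* The only common neighbours of v+a and v+b (a \<noteq> b) are v and v+a+b. *)
lemma common_nbr:
  assumes "flip (flip v a) i = flip (flip v b) j" "a \<noteq> b" "flip (flip v a) i \<noteq> v"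
  shows "flip (flip v a) i = flip (flip v a) b"
proof -
  have e: "\<And>z. ((z \<in> v) \<noteq> (z = a)) \<noteq> (z = i) \<longleftrightarrow> ((z \<in> v) \<noteq> (z = b)) \<noteq> (z = j)"
    using assms(1) by (auto simp: set_eq_iff mem_flip)
  have "i \<noteq> a" using assms(3) by auto
  then have "a = j" using e[of a] assms(2) by auto
  then have "i = b" using e[of i] assms(2) \<open>i \<noteq> a\<close> by auto
  thus ?thesis by simp
qed

definition dirs :: "nat set set set \<Rightarrow> nat \<Rightarrow> nat set \<Rightarrow> nat set" where
  "dirs E n v = {a. a < n \<and> {v, flip v a} \<in> E}"

abbreviation deg :: "nat set set set \<Rightarrow> nat \<Rightarrow> nat set \<Rightarrow> nat" where
  "deg E n v \<equiv> card (dirs E n v)"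

lemma dirs_sub: "dirs E n v \<subseteq> {..<n}"
  by (auto simp: dirs_def)

lemma finite_dirs [simp]: "finite (dirs E n v)"
  by (rule finite_subset[OF dirs_sub]) simp

lemma dirs_flip: "a \<in> dirs E n v \<Longrightarrow> a \<in> dirs E n (flip v a)"
  by (simp add: dirs_def insert_commute)

lemma card_missing_dirs: "card ({..<n} - dirs E n v) = n - deg E n v"
  by (simp add: card_Diff_subset dirs_sub)

definition cube_emb :: "nat \<Rightarrow> nat \<Rightarrow> (nat set \<Rightarrow> nat set) \<Rightarrow> bool" where
  "cube_emb m n f \<longleftrightarrow> inj_on f (QV m) \<and> (\<forall>e\<in>QE m. f ` e \<in> QE n)"

lemma copy_emb:
  assumes "is_copy n m H" "H \<subseteq> QE n"
  obtains f where "cube_emb m n f" "H = (\<lambda>e. f ` e) ` QE m"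
proof -
  obtain f where f: "inj_on f (QV m)" "H = (\<lambda>e. f ` e) ` QE m"
    using assms(1) unfolding is_copy_def by blast
  then have "\<forall>e\<in>QE m. f ` e \<in> QE n" using assms(2) by auto
  then show thesis using that f by (simp add: cube_emb_def)
qed

lemma cube_emb_nbr:
  assumes "cube_emb m n f" "x \<in> QV m" "j < m"
  shows "\<exists>a<n. f (flip x j) = flip (f x) a"
proof -
  have "f ` {x, flip x j} \<in> QE n" using assms QE_memI unfolding cube_emb_def by blast
  thus ?thesis using QE_pair by simp
qed

(* Locally, an embedded cube is a coordinate subcube: if f moves directions j, k at x
   to directions a, b at f x, then a \<noteq> b and f maps x+j+k to (f x)+a+b. *)
lemma cube_emb_square:
  assumes f: "cube_emb m n f" and x: "x \<in> QV m" and jk: "j < m" "k < m" "j \<noteq> k"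
    and a: "f (flip x j) = flip (f x) a" and b: "f (flip x k) = flip (f x) b"
  shows "a \<noteq> b \<and> f (flip (flip x j) k) = flip (flip (f x) a) b"
proof -
  let ?s = "flip (flip x j) k"
  have inj: "inj_on f (QV m)" using f by (simp add: cube_emb_def)
  have QVs: "flip x j \<in> QV m" "flip x k \<in> QV m" "?s \<in> QV m"
    using flip_QV x jk by simp_all
  have ab: "a \<noteq> b" using inj_onD[OF inj _ QVs(1,2)] a b jk(3) by force
  have "?s \<noteq> x" using jk(3) by (metis flip_flip flip_inj)
  then have sx: "f ?s \<noteq> f x" using inj_onD[OF inj _ QVs(3) x] by blast
  obtain i where i: "f ?s = flip (flip (f x) a) i"
    using cube_emb_nbr[OF f QVs(1) jk(2)] a by auto
  obtain l where l: "f ?s = flip (flip (f x) b) l"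
    using cube_emb_nbr[OF f QVs(2) jk(1)] b flip_comm by metis
  show ?thesis using common_nbr[of "f x" a i b l] i l ab sx by simp
qed

lemma copy_through_missing_edge:
  assumes "semi_saturated n m E" "e \<in> QE n - E"
  obtains H where "H \<subseteq> insert e E" "is_copy n m H" "e \<in> H"
proof -
  have "num_copies n m E < num_copies n m (insert e E)"
    using assms unfolding semi_saturated_def by blast
  then have "{H. H \<subseteq> insert e E \<and> is_copy n m H} \<noteq> {H. H \<subseteq> E \<and> is_copy n m H}"
    unfolding num_copies_def by auto
  then show thesis using that by blast
qed

lemma image_edge_oriented:
  assumes "e0 \<in> QE m" "f ` e0 = {v, w}"
  obtains p c where "p \<in> QV m" "c < m" "f p = v" "f (flip p c) = w"
proof -
  from assms(1) obtain x j where x: "x \<in> QV m" "j < m" "e0 = {x, flip x j}"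
    unfolding QE_iff by blast
  have fx: "{f x, f (flip x j)} = {v, w}" using assms(2) x(3) by simp
  show thesis
  proof (cases "f x = v")
    case True
    then have "f (flip x j) = w" using fx by (auto simp: doubleton_eq_iff)
    then show thesis using that x True by blast
  next
    case False
    then have "f (flip x j) = v" "f x = w" using fx by (auto simp: doubleton_eq_iff)
    then show thesis using that[of "flip x j" j] x(1,2) flip_QV by simp
  qed
qed

lemma cube_emb_local_dirs:
  assumes f: "cube_emb m n f" and p: "p \<in> QV m" "c < m" "f (flip p c) = flip (f p) b"
  obtains S where "card S = m - 1" "b \<notin> S"
    "\<And>a. a \<in> S \<Longrightarrow> \<exists>j<m. j \<noteq> c \<and> f (flip p j) = flip (f p) a \<and>
                          f (flip (flip p j) c) = flip (flip (f p) a) b"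
proof -
  obtain g where g: "\<And>j. j < m \<Longrightarrow> f (flip p j) = flip (f p) (g j)"
    using cube_emb_nbr[OF f p(1)] by metis
  have gc: "g c = b" using g[OF p(2)] p(3) by simp
  have square: "g j \<noteq> b \<and> f (flip (flip p j) c) = flip (flip (f p) (g j)) b"
    if "j < m" "j \<noteq> c" for j
    using cube_emb_square[OF f p(1) that(1) p(2) that(2) g[OF that(1)] g[OF p(2)]] gc by simp
  have g_inj: "inj_on g {..<m}"
  proof (rule inj_onI)
    fix j k assume jk: "j \<in> {..<m}" "k \<in> {..<m}" "g j = g k"
    then have "f (flip p j) = f (flip p k)" using g by simp
    then have "flip p j = flip p k"
      using inj_onD f flip_QV p(1) jk(1,2) unfolding cube_emb_def by (metis lessThan_iff)
    thus "j = k" by simp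
  qed
  show thesis
  proof (rule that[of "g ` ({..<m} - {c})"])
    show "card (g ` ({..<m} - {c})) = m - 1"
      using card_image[OF inj_on_subset[OF g_inj]] p(2) by (simp add: card_Diff_singleton)
    show "b \<notin> g ` ({..<m} - {c})" using square by auto
    show "\<exists>j<m. j \<noteq> c \<and> f (flip p j) = flip (f p) a \<and> f (flip (flip p j) c) = flip (flip (f p) a) b"
      if "a \<in> g ` ({..<m} - {c})" for a
      using that g square by auto
  qed
qed

lemma missing_edge_emb:
  assumes ss: "semi_saturated n m E" and v: "v \<in> QV n" and b: "b < n" "b \<notin> dirs E n v"
  obtains f p c where "cube_emb m n f" "p \<in> QV m" "c < m" "f p = v" "f (flip p c) = flip v b"
    "\<And>x j. x \<in> QV m \<Longrightarrow> j < m \<Longrightarrow> {f x, f (flip x j)} \<noteq> {v, flip v b} \<Longrightarrow>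
            {f x, f (flip x j)} \<in> E"
proof -
  define e where "e = {v, flip v b}"
  have EQ: "E \<subseteq> QE n" using ss by (simp add: semi_saturated_def)
  have eQ: "e \<in> QE n - E" using QE_memI[OF v b(1)] b by (simp add: e_def dirs_def)
  obtain H where H: "H \<subseteq> insert e E" "is_copy n m H" "e \<in> H"
    using copy_through_missing_edge[OF ss eQ] .
  have "H \<subseteq> QE n" using H(1) EQ eQ by blast
  then obtain f where f: "cube_emb m n f" and Hf: "H = (\<lambda>e. f ` e) ` QE m"
    using copy_emb[OF H(2)] by blast
  have inE: "{f x, f (flip x j)} \<in> E" if "x \<in> QV m" "j < m" "{f x, f (flip x j)} \<noteq> e" for x j
  proof -
    have "f ` {x, flip x j} \<in> H" unfolding Hf using QE_memI[OF that(1,2)] by (rule imageI)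
    then have "{f x, f (flip x j)} \<in> insert e E" using H(1) by auto
    thus ?thesis using that(3) by simp
  qed
  from H(3) obtain e0 where e0: "e0 \<in> QE m" "e = f ` e0" unfolding Hf by blast
  from e0(1) have "f ` e0 = {v, flip v b}" using e0(2) by (simp add: e_def)
  with e0(1) obtain p c where pc: "p \<in> QV m" "c < m" "f p = v" "f (flip p c) = flip v b"
    by (rule image_edge_oriented)
  show thesis by (rule that[OF f pc inE[unfolded e_def]])
qed

lemma missing_edge_squares:
  assumes ss: "semi_saturated n m E" and v: "v \<in> QV n" and b: "b < n" "b \<notin> dirs E n v"
  obtains S where "S \<subseteq> dirs E n v" "card S = m - 1" "b \<notin> S"
    "\<And>a. a \<in> S \<Longrightarrow> {flip v a, flip (flip v a) b} \<in> E \<and> {flip v b, flip (flip v a) b} \<in> E"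
proof -
  define e where "e = {v, flip v b}"
  obtain f p c where f: "cube_emb m n f" and p: "p \<in> QV m" "c < m" "f p = v" "f (flip p c) = flip v b"
    and inE: "\<And>x j. x \<in> QV m \<Longrightarrow> j < m \<Longrightarrow> {f x, f (flip x j)} \<noteq> e \<Longrightarrow> {f x, f (flip x j)} \<in> E"
    using missing_edge_emb[OF ss v b] unfolding e_def by metis
  have "f (flip p c) = flip (f p) b" using p(3,4) by simp
  from cube_emb_local_dirs[OF f p(1,2) this] obtain S where S: "card S = m - 1" "b \<notin> S"
    and sq: "\<And>a. a \<in> S \<Longrightarrow> \<exists>j<m. j \<noteq> c \<and> f (flip p j) = flip (f p) a \<and>
                                f (flip (flip p j) c) = flip (flip (f p) a) b"
    by metis
  have edges: "{v, flip v a} \<in> E \<and> {flip v a, flip (flip v a) b} \<in> E \<and>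
                {flip v b, flip (flip v a) b} \<in> E" if aS: "a \<in> S" for a
  proof -
    obtain j where j: "j < m" "j \<noteq> c" "f (flip p j) = flip v a"
      and fs: "f (flip (flip p j) c) = flip (flip v a) b" using sq[OF aS] p(3) by auto
    have jQ: "flip p j \<in> QV m" and cQ: "flip p c \<in> QV m" using flip_QV p j by simp_all
    have "a \<noteq> b" using aS S(2) by blast
    then have "flip (flip v a) b \<noteq> v" "flip (flip v a) b \<noteq> flip v b"
      by (metis flip_flip flip_inj, metis flip_comm flip_neq(1))
    then have ne: "{v, flip v a} \<noteq> e" "{flip v a, flip (flip v a) b} \<noteq> e"
      "{flip v b, flip (flip v a) b} \<noteq> e"
      using \<open>a \<noteq> b\<close> by (auto simp: e_def doubleton_eq_iff)
    show ?thesis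
      using inE[OF p(1) j(1)] inE[OF jQ p(2)] inE[OF cQ j(1)] ne fs j(3) p(3,4)
      by (simp add: flip_comm[of p c j])
  qed
  have EQ: "E \<subseteq> QE n" using ss by (simp add: semi_saturated_def)
  have "S \<subseteq> dirs E n v"
  proof
    fix a assume "a \<in> S"
    then have "{v, flip v a} \<in> E" using edges by blast
    moreover have "{v, flip v a} \<in> QE n" using calculation EQ by (rule subsetD[rotated])
    then obtain i where "i < n" "flip v a = flip v i" using QE_pair by blast
    ultimately show "a \<in> dirs E n v" by (simp add: dirs_def)
  qed
  then show thesis
  proof (rule that[OF _ S])
    show "{flip v a, flip (flip v a) b} \<in> E \<and> {flip v b, flip (flip v a) b} \<in> E"
      if "a \<in> S" for a using edges[OF that] by simp
  qed
qed

lemma missing_dir_spreads: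
  assumes ss: "semi_saturated n m E" and v: "v \<in> QV n" and b: "b < n" "b \<notin> dirs E n v"
    and A: "A \<subseteq> dirs E n v" "card (dirs E n v - A) < m - 1"
  shows "\<exists>a\<in>A. b \<in> dirs E n (flip v a)"
proof -
  obtain S where S: "S \<subseteq> dirs E n v" "card S = m - 1" "b \<notin> S"
    and sq: "\<And>a. a \<in> S \<Longrightarrow> {flip v a, flip (flip v a) b} \<in> E \<and> {flip v b, flip (flip v a) b} \<in> E"
    using missing_edge_squares[OF ss v b] by metis
  have "\<not> S \<subseteq> dirs E n v - A"
  proof
    assume "S \<subseteq> dirs E n v - A"
    then have "card S \<le> card (dirs E n v - A)" by (simp add: card_mono)
    thus False using S(2) A(2) by simp
  qed
  then obtain a where "a \<in> A" "a \<in> S" using S(1) by blast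
  thus ?thesis using sq b(1) unfolding dirs_def by blast
qed

lemma missing_dir_exists: "deg E n v < n \<Longrightarrow> \<exists>b<n. b \<notin> dirs E n v"
  using card_mono[OF finite_dirs, of "{..<n}" E n v] by force

lemma deg_lower:
  assumes ss: "semi_saturated n m E" and v: "v \<in> QV n" and "deg E n v < n"
  shows "m - 1 \<le> deg E n v"
proof -
  obtain b where "b < n" "b \<notin> dirs E n v" using missing_dir_exists assms(3) by blast
  then obtain S where "S \<subseteq> dirs E n v" "card S = m - 1"
    using missing_edge_squares[OF ss v] by metis
  thus ?thesis using card_mono[OF finite_dirs] by metis
qed

lemma card_insert_subset:
  assumes "insert x A \<subseteq> D" "x \<notin> A" "finite D"
  shows "card A + 1 \<le> card D"
  using card_mono[OF assms(3,1)] finite_subset[OF _ assms(3)] assms(1,2) by auto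

lemma min_deg_nbr:
  assumes ss: "semi_saturated n m E" and v: "v \<in> QV n"
    and d: "deg E n v = m - 1" "deg E n v < n" and a: "a \<in> dirs E n v"
  shows "n - deg E n v + 1 \<le> deg E n (flip v a)"
proof -
  define B where "B = {..<n} - dirs E n v"
  have "0 < deg E n v" using a by (auto simp: card_gt_0_iff)
  then have small: "card (dirs E n v - {a}) < m - 1" using a d(1) by simp
  have "b \<in> dirs E n (flip v a)" if "b \<in> B" for b
  proof -
    have "b < n" "b \<notin> dirs E n v" using that by (auto simp: B_def)
    from missing_dir_spreads[OF ss v this _ small] show ?thesis using a by simp
  qed
  then have "insert a B \<subseteq> dirs E n (flip v a)" using dirs_flip[OF a] by blast
  moreover have "a \<notin> B" using a by (simp add: B_def)
  ultimately have "card B + 1 \<le> deg E n (flip v a)" by (rule card_insert_subset[OF _ _ finite_dirs])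
  thus ?thesis using card_missing_dirs[of n E v] by (simp add: B_def)
qed

lemma deg_m_nbr:
  assumes ss: "semi_saturated n m E" and v: "v \<in> QV n"
    and d: "deg E n v = m" and m2: "m \<ge> 2"
  shows "\<exists>a\<in>dirs E n v. n - m + 2 \<le> 2 * deg E n (flip v a)"
proof -
  obtain A where A: "A \<subseteq> dirs E n v" "card A = 2"
    using obtain_subset_with_card_n[of 2 "dirs E n v"] d m2 by metis
  then obtain a1 a2 where a12: "A = {a1, a2}" "a1 \<noteq> a2" by (auto simp: card_2_iff)
  have a: "a1 \<in> dirs E n v" "a2 \<in> dirs E n v" using A(1) a12(1) by auto
  define B where "B = {..<n} - dirs E n v"
  define B1 where "B1 = B \<inter> dirs E n (flip v a1)"
  define B2 where "B2 = B \<inter> dirs E n (flip v a2)"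
  have small: "card (dirs E n v - A) < m - 1"
    using A d m2 card_Diff_subset[OF finite_subset[OF A(1) finite_dirs] A(1)] by simp
  have "B \<subseteq> B1 \<union> B2"
  proof
    fix b assume b: "b \<in> B"
    then have "b < n" "b \<notin> dirs E n v" by (auto simp: B_def)
    from missing_dir_spreads[OF ss v this A(1) small]
    show "b \<in> B1 \<union> B2" using b a12(1) by (auto simp: B1_def B2_def)
  qed
  then have "card B \<le> card (B1 \<union> B2)" by (rule card_mono[rotated]) (simp add: B1_def B2_def)
  also have "\<dots> \<le> card B1 + card B2" by (rule card_Un_le)
  finally have "card B \<le> card B1 + card B2" .
  then have "n - m \<le> card B1 + card B2"
    using card_missing_dirs[of n E v] d by (simp add: B_def)
  moreover have nbr: "card Bi + 1 \<le> deg E n (flip v ai)"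
    if "Bi = B \<inter> dirs E n (flip v ai)" "ai \<in> dirs E n v" for Bi ai
  proof (rule card_insert_subset[OF _ _ finite_dirs])
    show "insert ai Bi \<subseteq> dirs E n (flip v ai)" using that dirs_flip by blast
    show "ai \<notin> Bi" using that by (simp add: B_def)
  qed
  ultimately have "n - m + 2 \<le> deg E n (flip v a1) + deg E n (flip v a2)"
    using nbr[OF B1_def a(1)] nbr[OF B2_def a(2)] by linarith
  then have "n - m + 2 \<le> 2 * deg E n (flip v a1) \<or> n - m + 2 \<le> 2 * deg E n (flip v a2)"
    by linarith
  then show ?thesis using a by blast
qed

definition high :: "nat set set set \<Rightarrow> nat \<Rightarrow> nat \<Rightarrow> nat set set" where
  "high E n T = {u \<in> QV n. T \<le> deg E n u}"

definition low :: "nat set set set \<Rightarrow> nat \<Rightarrow> nat \<Rightarrow> nat set set" where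
  "low E n T = {u \<in> QV n. deg E n u < T}"

definition high_dirs :: "nat set set set \<Rightarrow> nat \<Rightarrow> nat \<Rightarrow> nat set \<Rightarrow> nat set" where
  "high_dirs E n T v = {a \<in> dirs E n v. T \<le> deg E n (flip v a)}"

lemma low_vertex_charge:
  assumes ss: "semi_saturated n m E" and m2: "m \<ge> 2" and v: "v \<in> QV n"
    and T: "T = (n - m) div 2" and dT: "deg E n v < T"
  shows "m + 1 \<le> deg E n v + card (high_dirs E n T v)
                 + (if m = 2 \<and> deg E n v = 1 then 1 else 0)"
proof -
  have dn: "deg E n v < n" using dT T by linarith
  consider "m + 1 \<le> deg E n v" | "deg E n v = m" | "deg E n v = m - 1"
    using deg_lower[OF ss v dn] by linarith
  then show ?thesis
  proof cases
    case 1 then show ?thesis by simp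
  next
    case 2
    obtain a where a: "a \<in> dirs E n v" "n - m + 2 \<le> 2 * deg E n (flip v a)"
      using deg_m_nbr[OF ss v 2 m2] by blast
    then have "a \<in> high_dirs E n T v" using T by (simp add: high_dirs_def)
    then have "card (high_dirs E n T v) \<noteq> 0" by (auto simp: high_dirs_def)
    then show ?thesis using 2 by simp
  next
    case 3
    have "T \<le> deg E n (flip v a)" if "a \<in> dirs E n v" for a
      using min_deg_nbr[OF ss v 3 dn that] T dn 3 by linarith
    then have "high_dirs E n T v = dirs E n v" by (auto simp: high_dirs_def)
    then show ?thesis using 3 m2 by auto
  qed
qed

(* For m = 2, distinct vertices of degree 1 have distinct unique neighbours: if
   v + a = v' + a' with a \<noteq> a', the square through the missing edge at v in
   direction a' would give v' a second edge. *)
lemma leaf_partner_inj: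
  assumes ss: "semi_saturated n 2 E" and v: "v \<in> QV n"
    and a: "dirs E n v = {a}" and a': "dirs E n v' = {a'}" and eq: "flip v a = flip v' a'"
  shows "v = v'"
proof (cases "a = a'")
  case True then show ?thesis using eq by simp
next
  case False
  have a'n: "a' < n" "a' \<notin> dirs E n v" using a' dirs_sub[of E n v'] a False by auto
  obtain S where S: "S \<subseteq> dirs E n v" "card S = 2 - 1" "a' \<notin> S"
    "\<And>x. x \<in> S \<Longrightarrow> {flip v x, flip (flip v x) a'} \<in> E \<and> {flip v a', flip (flip v x) a'} \<in> E"
    using missing_edge_squares[OF ss v a'n] by metis
  have "S = {a}" using S(1,2) a by (auto simp: card_1_singleton_iff)
  then have "{flip v a', flip (flip v a) a'} \<in> E" using S(4) by simp
  moreover have v': "v' = flip (flip v a) a'" using eq by simp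
  ultimately have "{v', flip v' a} \<in> E" by (simp add: flip_comm insert_commute)
  then have "a \<in> dirs E n v'" using a dirs_sub[of E n v] by (auto simp: dirs_def)
  then show ?thesis using a' False by simp
qed

(* For m = 2 there are at most as many vertices of degree 1 as high vertices:
   the unique neighbour of a degree-1 vertex is high and determines it. *)
lemma leaves_le_high:
  assumes ss: "semi_saturated n 2 E" and Tn: "T \<le> n" and n2: "2 \<le> n"
  shows "card {v \<in> QV n. deg E n v = 1} \<le> card (high E n T)"
proof -
  define nb where "nb v = flip v (the_elem (dirs E n v))" for v
  have leaf: "\<exists>a. dirs E n v = {a} \<and> nb v = flip v a" if d: "deg E n v = 1" for v
  proof -
    obtain a where "dirs E n v = {a}" using d card_1_singleton_iff[of "dirs E n v"] by auto
    then show ?thesis by (simp add: nb_def)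
  qed
  show ?thesis
  proof (rule card_inj_on_le)
    show "finite (high E n T)" by (simp add: high_def)
    show "nb ` {v \<in> QV n. deg E n v = 1} \<subseteq> high E n T"
    proof clarify
      fix v assume v: "v \<in> QV n" "deg E n v = 1"
      obtain a where a: "dirs E n v = {a}" "nb v = flip v a" using leaf[OF v(2)] by blast
      have ad: "a \<in> dirs E n v" using a by simp
      have "n - deg E n v + 1 \<le> deg E n (flip v a)"
        by (rule min_deg_nbr[OF ss v(1) _ _ ad]) (use v(2) n2 in simp_all)
      moreover have "flip v a \<in> QV n" using flip_QV[OF v(1)] ad dirs_sub by blast
      ultimately show "nb v \<in> high E n T" using a(2) v(2) Tn by (simp add: high_def)
    qed
    show "inj_on nb {v \<in> QV n. deg E n v = 1}"
    proof (rule inj_onI)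
      fix v v' assume v: "v \<in> {v \<in> QV n. deg E n v = 1}" and v': "v' \<in> {v \<in> QV n. deg E n v = 1}"
        and eq: "nb v = nb v'"
      obtain a where a: "dirs E n v = {a}" "nb v = flip v a" using leaf v by blast
      obtain a' where a': "dirs E n v' = {a'}" "nb v' = flip v' a'" using leaf v' by blast
      show "v = v'" using leaf_partner_inj[OF ss _ a(1) a'(1)] v eq a(2) a'(2) by simp
    qed
  qed
qed

lemma handshake_le:
  assumes EQ: "E \<subseteq> QE n"
  shows "(\<Sum>v\<in>QV n. deg E n v) \<le> 2 * card E"
proof -
  have fE: "finite E" using finite_subset[OF EQ finite_QE] .
  have edges: "finite e \<and> card e \<le> 2" if "e \<in> E" for e using card_QE_edge EQ that by blast
  have "(\<Sum>v\<in>QV n. deg E n v) = card (SIGMA v:QV n. dirs E n v)"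
    by (simp add: card_SigmaI)
  also have "\<dots> \<le> card (SIGMA e:E. e)"
  proof (rule card_inj_on_le)
    show "inj_on (\<lambda>(v, a). ({v, flip v a}, v)) (SIGMA v:QV n. dirs E n v)"
    proof (rule inj_onI)
      fix x y assume "(\<lambda>(v, a). ({v, flip v a}, v)) x = (\<lambda>(v, a). ({v, flip v a}, v)) y"
      then show "x = y" by (cases x, cases y) (simp add: doubleton_eq_iff)
    qed
    show "(\<lambda>(v, a). ({v, flip v a}, v)) ` (SIGMA v:QV n. dirs E n v) \<subseteq> (SIGMA e:E. e)"
      by (auto simp: dirs_def)
    show "finite (SIGMA e:E. e)" using fE edges by (intro finite_SigmaI) auto
  qed
  also have "\<dots> = (\<Sum>e\<in>E. card e)" using fE edges by (simp add: card_SigmaI)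
  also have "\<dots> \<le> (\<Sum>e\<in>E. 2)" using edges by (intro sum_mono) simp
  finally show ?thesis by simp
qed

(* Each high direction (v,a) is an edge direction at the high vertex v+a, so the high
   neighbours counted over all vertices are bounded by the total degree of high vertices. *)
lemma sum_high_dirs_le:
  "(\<Sum>v\<in>QV n. card (high_dirs E n T v)) \<le> (\<Sum>u\<in>high E n T. deg E n u)"
proof -
  have fH: "finite (high E n T)" by (simp add: high_def)
  have "(\<Sum>v\<in>QV n. card (high_dirs E n T v)) = card (SIGMA v:QV n. high_dirs E n T v)"
    by (simp add: card_SigmaI high_dirs_def)
  also have "\<dots> \<le> card (SIGMA u:high E n T. dirs E n u)"
  proof (rule card_inj_on_le)
    show "inj_on (\<lambda>(v, a). (flip v a, a)) (SIGMA v:QV n. high_dirs E n T v)"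
    proof (rule inj_onI)
      fix x y assume "(\<lambda>(v, a). (flip v a, a)) x = (\<lambda>(v, a). (flip v a, a)) y"
      then show "x = y" by (cases x, cases y) simp
    qed
    show "(\<lambda>(v, a). (flip v a, a)) ` (SIGMA v:QV n. high_dirs E n T v)
          \<subseteq> (SIGMA u:high E n T. dirs E n u)"
    proof
      fix p assume "p \<in> (\<lambda>(v, a). (flip v a, a)) ` (SIGMA v:QV n. high_dirs E n T v)"
      then obtain v a where p: "p = (flip v a, a)" and v: "v \<in> QV n" and a: "a \<in> high_dirs E n T v"
        by auto
      then have ad: "a \<in> dirs E n v" "T \<le> deg E n (flip v a)" by (simp_all add: high_dirs_def)
      then have "flip v a \<in> QV n" using flip_QV[OF v] dirs_sub by blast
      then show "p \<in> (SIGMA u:high E n T. dirs E n u)"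
        using ad dirs_flip p by (simp add: high_def)
    qed
    show "finite (SIGMA u:high E n T. dirs E n u)" using fH by (intro finite_SigmaI) simp_all
  qed
  also have "\<dots> = (\<Sum>u\<in>high E n T. deg E n u)" using fH by (simp add: card_SigmaI)
  finally show ?thesis .
qed

lemma low_high_partition:
  "QV n = low E n T \<union> high E n T" "low E n T \<inter> high E n T = {}"
  "finite (low E n T)" "finite (high E n T)"
  by (auto simp: low_def high_def)

lemma low_charge_sum:
  assumes ss: "semi_saturated n m E" and m2: "m \<ge> 2"
    and T: "T = (n - m) div 2" and T1: "1 \<le> T"
  shows "(m + 1) * card (low E n T) \<le> (\<Sum>v\<in>QV n. deg E n v) + card (high E n T)"
proof -
  let ?L = "low E n T" and ?H = "high E n T"
  let ?extra = "\<lambda>v. (if m = 2 \<and> deg E n v = 1 then 1 else 0) :: nat"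
  have split: "(\<Sum>v\<in>QV n. deg E n v) = (\<Sum>v\<in>?L. deg E n v) + (\<Sum>v\<in>?H. deg E n v)"
    by (subst low_high_partition(1)) (rule sum.union_disjoint[OF low_high_partition(3,4,2)])
  have "(m + 1) * card ?L = (\<Sum>v\<in>?L. m + 1)" by simp
  also have "\<dots> \<le> (\<Sum>v\<in>?L. deg E n v + card (high_dirs E n T v) + ?extra v)"
    using low_vertex_charge[OF ss m2 _ T] by (intro sum_mono) (simp add: low_def)
  also have "\<dots> = (\<Sum>v\<in>?L. deg E n v) + (\<Sum>v\<in>?L. card (high_dirs E n T v)) + (\<Sum>v\<in>?L. ?extra v)"
    by (simp add: sum.distrib)
  also have "(\<Sum>v\<in>?L. card (high_dirs E n T v)) \<le> (\<Sum>v\<in>?H. deg E n v)"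
  proof -
    have "(\<Sum>v\<in>?L. card (high_dirs E n T v)) \<le> (\<Sum>v\<in>QV n. card (high_dirs E n T v))"
      by (rule sum_mono2) (auto simp: low_def)
    then show ?thesis using sum_high_dirs_le by (rule order_trans)
  qed
  also have "(\<Sum>v\<in>?L. ?extra v) \<le> card ?H"
  proof (cases "m = 2")
    case True
    have "(\<Sum>v\<in>?L. ?extra v) = card {v \<in> ?L. deg E n v = 1}"
      using True low_high_partition(3) by (simp add: sum.If_cases Int_def)
    also have "\<dots> \<le> card {v \<in> QV n. deg E n v = 1}" by (rule card_mono) (auto simp: low_def)
    also have "\<dots> \<le> card ?H"
      using ss T T1 True by (intro leaves_le_high) simp_all
    finally show ?thesis .
  qed simp
  finally show ?thesis using split by simp
qed

lemma double_count:
  assumes ss: "semi_saturated n m E" and m2: "m \<ge> 2"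
    and T: "T = (n - m) div 2" and T1: "1 \<le> T"
  shows "(m + 1) * 2 ^ n * T \<le> 2 * card E * (T + m + 2)"
proof -
  define D where "D = (\<Sum>v\<in>QV n. deg E n v)"
  let ?L = "low E n T" and ?H = "high E n T"
  have cardV: "card (QV n) = card ?L + card ?H"
    by (subst low_high_partition(1)) (rule card_Un_disjoint[OF low_high_partition(3,4,2)])
  have high_deg: "T * card ?H \<le> D"
  proof -
    have "T * card ?H = (\<Sum>v\<in>?H. T)" by simp
    also have "\<dots> \<le> (\<Sum>v\<in>?H. deg E n v)" by (rule sum_mono) (simp add: high_def)
    also have "\<dots> \<le> D" unfolding D_def by (rule sum_mono2) (auto simp: high_def)
    finally show ?thesis .
  qed
  have D_le: "D \<le> 2 * card E"
    unfolding D_def using ss by (intro handshake_le) (simp add: semi_saturated_def)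
  have "(m + 1) * card (QV n) \<le> D + (m + 2) * card ?H"
    using low_charge_sum[OF ss m2 T T1] cardV unfolding D_def by (simp add: algebra_simps)
  then have "(m + 1) * card (QV n) * T \<le> (D + (m + 2) * card ?H) * T"
    by (rule mult_right_mono) simp
  also have "\<dots> = D * T + (m + 2) * (T * card ?H)" by (simp add: algebra_simps)
  also have "\<dots> \<le> D * T + (m + 2) * D" using high_deg by (intro add_left_mono mult_left_mono) simp_all
  also have "\<dots> = D * (T + m + 2)" by (simp add: algebra_simps)
  also have "\<dots> \<le> 2 * card E * (T + m + 2)" using D_le by (rule mult_right_mono) simp
  finally show ?thesis by (simp add: card_QV)
qed

(* The minimum defining s_sat is attained, since Q_n itself is semi-saturated. *)
lemma s_sat_attained:
  obtains E where "semi_saturated n m E" "card E = s_sat n m"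
proof -
  have "semi_saturated n m (QE n)" by (simp add: semi_saturated_def)
  then have "\<exists>k E. semi_saturated n m E \<and> card E = k" by blast
  from LeastI_ex[OF this] show thesis using that unfolding s_sat_def by blast
qed

lemma ratio_bound:
  fixes A P T K c e :: real
  assumes h1: "A * P * T \<le> 2 * c * (T + K)" and h2: "A * K \<le> 2 * e * T"
    and P: "P > 0" and T: "T > 0" and K: "K > 0" and e: "e > 0"
  shows "(A / 2 - e) * P \<le> c"
proof (rule ccontr)
  assume "\<not> ?thesis"
  then have "2 * c < (A - 2 * e) * P" by (simp add: field_simps)
  then have "2 * c * (T + K) < (A - 2 * e) * P * (T + K)"
    using T K by (intro mult_strict_right_mono) simp_all
  also have "\<dots> = P * (A * T + (A * K - 2 * e * T) - 2 * e * K)" by (simp add: algebra_simps)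
  also have "\<dots> \<le> P * (A * T)"
    using P h2 mult_pos_pos[OF e K] by (intro mult_left_mono) simp_all
  finally show False using h1 by (simp add: algebra_simps)
qed

lemma s_sat_lower_bound:
  assumes m2: "m \<ge> 2" and \<epsilon>: "\<epsilon> > 0" and T: "T = (n - m) div 2" "1 \<le> T"
    and large: "(real m + 1) * (real m + 2) \<le> 2 * \<epsilon> * real T"
  shows "((real m + 1) / 2 - \<epsilon>) * 2 ^ n \<le> real (s_sat n m)"
proof -
  obtain E where E: "semi_saturated n m E" "card E = s_sat n m" by (rule s_sat_attained)
  have "(m + 1) * 2 ^ n * T \<le> 2 * card E * (T + m + 2)"
    by (rule double_count[OF E(1) m2 T])
  then have "real ((m + 1) * 2 ^ n * T) \<le> real (2 * card E * (T + m + 2))"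
    by (rule of_nat_mono)
  then have "(real m + 1) * 2 ^ n * real T \<le> 2 * real (card E) * (real T + (real m + 2))"
    by (simp only: of_nat_mult of_nat_add of_nat_power of_nat_numeral of_nat_1 add.assoc)
  from ratio_bound[OF this large] show ?thesis using \<epsilon> T(2) E(2) by simp
qed

theorem theorem4:
  fixes m :: nat
  assumes "m \<ge> 2"
  shows "\<forall>\<epsilon>>0. \<forall>\<^sub>F n in sequentially.
           real (s_sat n m) \<ge> ((real m + 1) / 2 - \<epsilon>) * 2 ^ n"
proof (intro allI impI)
  fix \<epsilon> :: real assume \<epsilon>: "\<epsilon> > 0"
  obtain N :: nat where N: "(real m + 1) * (real m + 2) / (2 * \<epsilon>) \<le> real N"
    using real_arch_simple by blast
  have "((real m + 1) / 2 - \<epsilon>) * 2 ^ n \<le> real (s_sat n m)" if n: "m + 2 * Suc N \<le> n" for n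
  proof (rule s_sat_lower_bound[OF assms \<epsilon> refl])
    have "Suc N \<le> (n - m) div 2" using n by presburger
    moreover have "(real m + 1) * (real m + 2) \<le> 2 * \<epsilon> * real N"
      using N \<epsilon> by (simp add: divide_le_eq mult.commute)
    ultimately show "1 \<le> (n - m) div 2"
      and "(real m + 1) * (real m + 2) \<le> 2 * \<epsilon> * real ((n - m) div 2)"
      using \<epsilon> by (auto intro: order_trans mult_left_mono)
  qed
  then show "\<forall>\<^sub>F n in sequentially. real (s_sat n m) \<ge> ((real m + 1) / 2 - \<epsilon>) * 2 ^ n"
    by (rule eventually_sequentiallyI)
qed

end
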